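(* For every $n\ge1$, the local $h^\ast$-polynomial $\ell^\ast(\Delta_n^!;z)$ of the factoradic $n$-simplex is $\gamma$-nonnegative: there are nonnegative numbers $\gamma_i$ with $\ell^\ast(\Delta_n^!;z)=\sum_{i=0}^{\lfloor (n+1)/2\rfloor}\gamma_i z^i(1+z)^{n+1-2i}$.
   Context: Let $b_{m,k}$ be the number of permutations $\pi\in\mathfrak{S}_m$ whose largest descent position (largest $i$ with $\pi_i>\pi_{i+1}$; $0$ for the identity) equals $k$. The factoradic $n$-simplex is $\Delta_n^!:=\operatorname{conv}\bigl(e^{(1)},\ldots,e^{(n)},-\sum_{k=1}^n b_{n+1,k}e^{(k)}\bigr)\subset\mathbb{R}^n$. For a lattice simplex $\Delta=\operatorname{conv}(v^{(0)},\ldots,v^{(d)})\subset\mathbb{R}^n$, $\ell^\ast(\Delta;z):=\sum_{x\in\Pi^\circ_\Delta\cap\mathbb{Z}^{n+1}}z^{x_{n+1}}$, where $\Pi^\circ_\Delta:=\{\sum_{i=0}^d\lambda_i(v^{(i)},1):0<\lambda_i<1\}$; for a $d$-simplex this polynomial is symmetric with respect to $d+1$. *)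

theory Defs
  imports "HOL-Combinatorics.Permutations" "HOL-Computational_Algebra.Polynomial"
begin

definition last_descent :: "nat \<Rightarrow> (nat \<Rightarrow> nat) \<Rightarrow> nat" where
  "last_descent m \<pi> = Max ({i \<in> {1..<m}. \<pi> i > \<pi> (Suc i)} \<union> {0})"

definition bnum :: "nat \<Rightarrow> nat \<Rightarrow> nat" where
  "bnum m k = card {\<pi>. \<pi> permutes {1..m} \<and> last_descent m \<pi> = k}"

text \<open>Points of R^n are functions nat \<Rightarrow> _ with coordinates indexed by 1..n
  (values outside {1..n} are irrelevant / zero).  A lattice simplex with
  vertices v 0, ..., v d is given by v :: nat \<Rightarrow> nat \<Rightarrow> int.\<close>

text \<open>Lattice points of the open fundamental parallelepiped Pi-open in Z^{n+1}: pairs (y, h)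
  where y gives the first n coordinates and h is the (n+1)-st coordinate.\<close>
definition par_lattice_points ::
  "nat \<Rightarrow> nat \<Rightarrow> (nat \<Rightarrow> nat \<Rightarrow> int) \<Rightarrow> ((nat \<Rightarrow> int) \<times> int) set" where
  "par_lattice_points d n v =
     {(y, h). (\<forall>j. j \<notin> {1..n} \<longrightarrow> y j = 0) \<and>
        (\<exists>c :: nat \<Rightarrow> real. (\<forall>i\<le>d. 0 < c i \<and> c i < 1) \<and>
           (\<forall>j\<in>{1..n}. real_of_int (y j) = (\<Sum>i\<le>d. c i * real_of_int (v i j))) \<and>
           real_of_int h = (\<Sum>i\<le>d. c i))}"

definition ell_star :: "nat \<Rightarrow> nat \<Rightarrow> (nat \<Rightarrow> nat \<Rightarrow> int) \<Rightarrow> real poly" where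
  "ell_star d n v = (\<Sum>x\<in>par_lattice_points d n v. monom 1 (nat (snd x)))"

text \<open>Factoradic n-simplex: vertices e^(1),...,e^(n), and -\<Sum>k b_{n+1,k} e^(k).
  We index them v 0 = the last vertex, v i = e^(i) for 1 \<le> i \<le> n.\<close>
definition factoradic_vertices :: "nat \<Rightarrow> nat \<Rightarrow> nat \<Rightarrow> int" where
  "factoradic_vertices n i j =
     (if i = 0 then (if j \<in> {1..n} then - int (bnum (Suc n) j) else 0)
      else if i = j \<and> j \<in> {1..n} then 1 else 0)"

end

theory Submission
  imports Defs
begin

text \<open>An interior lattice point of the fundamental parallelepiped of the factoradic simplex is
  determined by its barycentric coefficient \<open>c_0 = t / (n+1)!\<close> at the vertex
  \<open>-\<Sum>\<^sub>k b(n+1,k) e(k)\<close>; the other coefficients are the fractional parts of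
  \<open>t b(n+1,k) / (n+1)!\<close>.  Since \<open>b(n+1,k) = (n+1)!/(n+1-k)! - (n+1)!/(n+2-k)!\<close>, these
  fractional parts telescope in the factorial number system: with \<open>G_s = ((n+1)!/s!) (t mod s!)\<close>,
  the point is interior iff \<open>G_s \<noteq> G_(s+1)\<close> for all \<open>s\<close>, and its height is the number of \<open>s\<close>
  with \<open>G_s < G_(s+1)\<close>.  So the local \<open>h\<^sup>*\<close>-polynomial is a sum over \<open>t\<close> of products of
  weights \<open>0\<close>, \<open>1\<close> or \<open>z\<close>, each depending on two consecutive factoradic digits of \<open>t\<close>.
  Summing digit by digit turns it into \<open>z\<close> times an ascent-counting polynomial of sequences
  \<open>j_s \<le> s\<close>, whose \<open>\<gamma>\<close>-nonnegativity follows by downward induction on \<open>s\<close> after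
  symmetrising each digit sum under \<open>k \<mapsto> s + 1 - k\<close>.\<close>

section \<open>\<open>\<gamma>\<close>-nonnegative polynomials\<close>

definition gamma_nonneg :: "nat \<Rightarrow> real poly \<Rightarrow> bool" where
  "gamma_nonneg d p \<longleftrightarrow> (\<exists>\<gamma>::nat \<Rightarrow> real. (\<forall>i. \<gamma> i \<ge> 0) \<and>
      p = (\<Sum>i\<le>d div 2. smult (\<gamma> i) (monom 1 i * [:1, 1:] ^ (d - 2 * i))))"

abbreviation X :: "real poly" where "X \<equiv> monom 1 1"

lemma one_plus_X: "[:1, 1:] = 1 + X"
  by (auto simp: poly_eq_iff coeff_pCons coeff_monom split: nat.split)

lemma smult_sum_right: "smult c (sum f A) = (\<Sum>i\<in>A. smult c (f i))"
  by (induction A rule: infinite_finite_induct) (auto simp: smult_add_right)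

lemma gamma_nonneg_0: "gamma_nonneg d 0"
  unfolding gamma_nonneg_def by (intro exI[of _ "\<lambda>i. 0"]) auto

lemma gamma_nonneg_const: "c \<ge> 0 \<Longrightarrow> gamma_nonneg 0 [:c:]"
  unfolding gamma_nonneg_def by (intro exI[of _ "\<lambda>i. c"]) (auto simp: monom_0)

lemma gamma_nonneg_1_plus_X: "gamma_nonneg 1 [:1, 1:]"
  unfolding gamma_nonneg_def by (intro exI[of _ "\<lambda>i. 1"]) auto

lemma gamma_nonneg_add:
  assumes "gamma_nonneg d p" "gamma_nonneg d q"
  shows "gamma_nonneg d (p + q)"
proof -
  from assms obtain g1 g2 where "\<forall>i. g1 i \<ge> 0" "\<forall>i. g2 i \<ge> 0"
    "p = (\<Sum>i\<le>d div 2. smult (g1 i) (monom 1 i * [:1, 1:] ^ (d - 2 * i)))"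
    "q = (\<Sum>i\<le>d div 2. smult (g2 i) (monom 1 i * [:1, 1:] ^ (d - 2 * i)))"
    unfolding gamma_nonneg_def by blast
  then show ?thesis unfolding gamma_nonneg_def
    by (intro exI[of _ "\<lambda>i. g1 i + g2 i"]) (auto simp: sum.distrib[symmetric] smult_add_left)
qed

lemma gamma_nonneg_smult:
  assumes "gamma_nonneg d p" "c \<ge> 0"
  shows "gamma_nonneg d (smult c p)"
proof -
  from assms obtain g where "\<forall>i. g i \<ge> 0"
    "p = (\<Sum>i\<le>d div 2. smult (g i) (monom 1 i * [:1, 1:] ^ (d - 2 * i)))"
    unfolding gamma_nonneg_def by blast
  then show ?thesis unfolding gamma_nonneg_def
    using \<open>c \<ge> 0\<close> by (intro exI[of _ "\<lambda>i. c * g i"]) (auto simp: smult_sum_right)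
qed

lemma gamma_nonneg_sum:
  "finite A \<Longrightarrow> (\<And>a. a \<in> A \<Longrightarrow> gamma_nonneg d (f a)) \<Longrightarrow> gamma_nonneg d (\<Sum>a\<in>A. f a)"
  by (induction A rule: finite_induct) (auto intro: gamma_nonneg_add gamma_nonneg_0)

lemma gamma_nonneg_mult_X:
  assumes "gamma_nonneg d p"
  shows "gamma_nonneg (d + 2) (X * p)"
proof -
  from assms obtain g where g: "\<forall>i. g i \<ge> 0"
    "p = (\<Sum>i\<le>d div 2. smult (g i) (monom 1 i * [:1, 1:] ^ (d - 2 * i)))"
    unfolding gamma_nonneg_def by blast
  define g' where "g' i = (if i = 0 then 0 else g (i - 1))" for i
  have X_monom: "monom 1 (Suc i) * q = X * (monom 1 i * q)" for i and q :: "real poly"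
    by (simp add: mult_monom mult.assoc[symmetric])
  have "(\<Sum>i\<le>(d + 2) div 2. smult (g' i) (monom 1 i * [:1, 1:] ^ (d + 2 - 2 * i)))
      = (\<Sum>i\<le>d div 2. smult (g' (Suc i)) (monom 1 (Suc i) * [:1, 1:] ^ (d + 2 - 2 * Suc i)))"
  proof -
    have e: "(d + 2) div 2 = Suc (d div 2)" by simp
    show ?thesis unfolding e sum.atMost_Suc_shift by (simp add: g'_def)
  qed
  also have "\<dots> = (\<Sum>i\<le>d div 2. X * smult (g i) (monom 1 i * [:1, 1:] ^ (d - 2 * i)))"
    by (rule sum.cong) (simp_all only: g'_def X_monom mult_smult_right, simp)
  also have "\<dots> = X * p"
    by (simp add: g(2) sum_distrib_left)
  finally show ?thesis
    unfolding gamma_nonneg_def using g(1) by (intro exI[of _ g']) (auto simp: g'_def)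
qed

lemma gamma_nonneg_mult_1_plus_X:
  assumes "gamma_nonneg d p"
  shows "gamma_nonneg (d + 1) ([:1, 1:] * p)"
proof -
  from assms obtain g where g: "\<forall>i. g i \<ge> 0"
    "p = (\<Sum>i\<le>d div 2. smult (g i) (monom 1 i * [:1, 1:] ^ (d - 2 * i)))"
    unfolding gamma_nonneg_def by blast
  define g' where "g' i = (if i \<le> d div 2 then g i else 0)" for i
  have "(\<Sum>i\<le>(d + 1) div 2. smult (g' i) (monom 1 i * [:1, 1:] ^ (d + 1 - 2 * i)))
      = (\<Sum>i\<le>d div 2. smult (g' i) (monom 1 i * [:1, 1:] ^ (d + 1 - 2 * i)))"
    by (rule sum.mono_neutral_right) (auto simp: g'_def)
  also have "\<dots> = (\<Sum>i\<le>d div 2. [:1, 1:] * smult (g i) (monom 1 i * [:1, 1:] ^ (d - 2 * i)))"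
  proof (rule sum.cong)
    fix i assume i: "i \<in> {..d div 2}"
    then have "d + 1 - 2 * i = Suc (d - 2 * i)" by auto
    then show "smult (g' i) (monom 1 i * [:1, 1:] ^ (d + 1 - 2 * i))
        = [:1, 1:] * smult (g i) (monom 1 i * [:1, 1:] ^ (d - 2 * i))"
      using i by (simp add: g'_def mult_smult_right algebra_simps)
  qed simp
  also have "\<dots> = [:1, 1:] * p" by (simp add: g(2) sum_distrib_left)
  finally show ?thesis
    unfolding gamma_nonneg_def using g(1) by (intro exI[of _ g']) (auto simp: g'_def)
qed

section \<open>Counting permutations by their last descent\<close>

definition ascending_tail_perms :: "nat \<Rightarrow> nat \<Rightarrow> (nat \<Rightarrow> nat) set" where
  "ascending_tail_perms m k =
     {\<pi>. \<pi> permutes {1..m} \<and> (\<forall>i. k < i \<and> i < m \<longrightarrow> \<pi> i < \<pi> (Suc i))}"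

lemma finite_ascending_tail_perms: "finite (ascending_tail_perms m k)"
  unfolding ascending_tail_perms_def
  by (rule finite_subset[OF _ finite_permutations[of "{1..m}"]]) auto

lemma ascending_tail_perms_mono: "k \<le> k' \<Longrightarrow> ascending_tail_perms m k \<subseteq> ascending_tail_perms m k'"
  unfolding ascending_tail_perms_def by auto

lemma last_descent_le_iff:
  assumes "\<pi> permutes {1..m}"
  shows "last_descent m \<pi> \<le> k \<longleftrightarrow> (\<forall>i. k < i \<and> i < m \<longrightarrow> \<pi> i < \<pi> (Suc i))"
proof -
  have descent_iff: "\<pi> (Suc i) < \<pi> i \<longleftrightarrow> \<not> \<pi> i < \<pi> (Suc i)" for i
    using permutes_inj[OF assms] by (metis inj_eq n_not_Suc_n linorder_neqE_nat less_asym)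
  have "last_descent m \<pi> \<le> k \<longleftrightarrow> (\<forall>x\<in>{i \<in> {1..<m}. \<pi> (Suc i) < \<pi> i} \<union> {0}. x \<le> k)"
    unfolding last_descent_def by (rule Max_le_iff) auto
  also have "\<dots> \<longleftrightarrow> (\<forall>i. k < i \<and> i < m \<longrightarrow> \<pi> i < \<pi> (Suc i))"
    unfolding descent_iff by (fastforce simp: not_le[symmetric])
  finally show ?thesis .
qed

lemma ascending_tail_perms_eq:
  "ascending_tail_perms m k = {\<pi>. \<pi> permutes {1..m} \<and> last_descent m \<pi> \<le> k}"
  unfolding ascending_tail_perms_def using last_descent_le_iff by blast

lemma ascending_tail_strict_mono:
  assumes "\<forall>i. k < i \<and> i < m \<longrightarrow> \<pi> i < \<pi> (Suc i)" "k < a" "a < b" "b \<le> m"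
  shows "\<pi> a < (\<pi> b :: nat)"
  using assms(3,4)
proof (induction b)
  case (Suc b)
  then show ?case
    using assms(1,2) by (cases "a = b") (auto intro: less_trans[of "\<pi> a" "\<pi> b"])
qed simp

text \<open>Inverse of \<open>\<pi> \<mapsto> map \<pi> [1..<Suc k]\<close> on \<open>ascending_tail_perms m k\<close>.\<close>
definition perm_of_prefix :: "nat \<Rightarrow> nat list \<Rightarrow> nat \<Rightarrow> nat" where
  "perm_of_prefix m xs =
     (\<lambda>i. if i \<in> {1..m} then (xs @ sorted_list_of_set ({1..m} - set xs)) ! (i - 1) else i)"

lemma perm_of_prefix:
  assumes xs: "length xs = k" "distinct xs" "set xs \<subseteq> {1..m}"
  shows "perm_of_prefix m xs \<in> ascending_tail_perms m k"
    and "map (perm_of_prefix m xs) [1..<Suc k] = xs"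
proof -
  define zs where "zs = sorted_list_of_set ({1..m} - set xs)"
  define ys where "ys = xs @ zs"
  have km: "k \<le> m" using xs card_mono[OF _ xs(3)] distinct_card[OF xs(2)] by fastforce
  have zs: "sorted_wrt (<) zs" "length zs = m - k"
    using xs km by (auto simp: zs_def strict_sorted_iff card_Diff_subset distinct_card)
  have ys: "distinct ys" "set ys = {1..m}" "length ys = m"
    using xs zs km by (auto simp: ys_def zs_def strict_sorted_iff)
  have P: "perm_of_prefix m xs = (\<lambda>i. if i \<in> {1..m} then ys ! (i - 1) else i)"
    unfolding perm_of_prefix_def ys_def zs_def by (rule refl)
  have "bij_betw (\<lambda>i. i - 1) {1..m} {..<m}"
    by (rule bij_betw_byWitness[where f'=Suc]) auto
  moreover have "bij_betw ((!) ys) {..<m} {1..m}"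
    using ys by (intro bij_betw_nth) auto
  ultimately have "bij_betw (\<lambda>i. ys ! (i - 1)) {1..m} {1..m}"
    using bij_betw_trans by (fastforce simp: comp_def)
  then have "bij_betw (perm_of_prefix m xs) {1..m} {1..m}"
    by (rule bij_betw_cong[THEN iffD1, rotated]) (simp add: P)
  then have perm: "perm_of_prefix m xs permutes {1..m}"
    by (rule bij_imp_permutes) (auto simp: P)
  have "perm_of_prefix m xs i < perm_of_prefix m xs (Suc i)" if i: "k < i" "i < m" for i
  proof -
    have "perm_of_prefix m xs i = zs ! (i - 1 - k)" "perm_of_prefix m xs (Suc i) = zs ! (i - k)"
      using i xs by (auto simp: P ys_def nth_append)
    moreover have "zs ! (i - 1 - k) < zs ! (i - k)"
      using i zs by (intro sorted_wrt_nth_less[OF zs(1)]) auto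
    ultimately show ?thesis by simp
  qed
  with perm show "perm_of_prefix m xs \<in> ascending_tail_perms m k"
    by (simp add: ascending_tail_perms_def)
  show "map (perm_of_prefix m xs) [1..<Suc k] = xs"
    using xs km by (intro nth_equalityI) (auto simp: P ys_def nth_append simp del: upt_Suc)
qed

lemma prefix_of_ascending_tail_perm:
  assumes p: "\<pi> \<in> ascending_tail_perms m k" and km: "k \<le> m"
  shows "distinct (map \<pi> [1..<Suc k])" "set (map \<pi> [1..<Suc k]) \<subseteq> {1..m}"
    and "perm_of_prefix m (map \<pi> [1..<Suc k]) = \<pi>"
proof -
  have perm: "\<pi> permutes {1..m}" and tail: "\<forall>i. k < i \<and> i < m \<longrightarrow> \<pi> i < \<pi> (Suc i)"
    using p by (auto simp: ascending_tail_perms_def)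
  have inj: "inj_on \<pi> A" for A using permutes_inj[OF perm] by (rule inj_on_subset) simp
  have img: "\<pi> ` {1..m} = {1..m}" using permutes_image[OF perm] .
  define xs where "xs = map \<pi> [1..<Suc k]"
  have sx: "set xs = \<pi> ` {1..k}" by (auto simp: xs_def)
  show "distinct (map \<pi> [1..<Suc k])" by (simp add: distinct_map inj)
  show "set (map \<pi> [1..<Suc k]) \<subseteq> {1..m}"
    using img km by (auto simp: xs_def)
  have tl: "sorted_list_of_set ({1..m} - set xs) = map \<pi> [Suc k..<Suc m]"
  proof (rule sorted_distinct_set_unique)
    have "sorted_wrt (<) (map \<pi> [Suc k..<Suc m])"
      by (rule sorted_wrt_map_mono[OF sorted_wrt_upt])
        (use tail in \<open>auto intro: ascending_tail_strict_mono\<close>)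
    then show "sorted (map \<pi> [Suc k..<Suc m])" "distinct (map \<pi> [Suc k..<Suc m])"
      by (auto simp: strict_sorted_iff)
    have "{1..m} - \<pi> ` {1..k} = \<pi> ` ({1..m} - {1..k})"
      using img inj_on_image_set_diff[OF inj, of "{1..m}" "{1..k}"] km by auto
    also have "{1..m} - {1..k} = {Suc k..m}" by auto
    finally show "set (sorted_list_of_set ({1..m} - set xs)) = set (map \<pi> [Suc k..<Suc m])"
      unfolding sx by (simp del: upt_Suc add: atLeastLessThanSuc_atLeastAtMost)
  qed auto
  have "[1..<Suc m] = [1..<Suc k] @ [Suc k..<Suc m]"
    using km upt_add_eq_append[of 1 "Suc k" "m - k"] by (simp del: upt_Suc)
  then have ys: "xs @ map \<pi> [Suc k..<Suc m] = map \<pi> [1..<Suc m]"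
    by (simp add: xs_def del: upt_Suc)
  show "perm_of_prefix m xs = \<pi>"
  proof
    fix i show "perm_of_prefix m xs i = \<pi> i"
    proof (cases "i \<in> {1..m}")
      case True
      then have "i - 1 < length [1..<Suc m]" by auto
      then show ?thesis unfolding perm_of_prefix_def tl ys using True by (simp del: upt_Suc)
    next
      case False
      then show ?thesis using permutes_not_in[OF perm False] unfolding perm_of_prefix_def by auto
    qed
  qed
qed

lemma card_ascending_tail_perms:
  assumes "k \<le> m"
  shows "card (ascending_tail_perms m k) = fact m div fact (m - k)"
proof -
  define L where "L = {xs. length xs = k \<and> distinct xs \<and> set xs \<subseteq> {1..m}}"
  have "bij_betw (\<lambda>\<pi>. map \<pi> [1..<Suc k]) (ascending_tail_perms m k) L"
  proof (rule bij_betw_byWitness[where f'="perm_of_prefix m"])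
    show "\<forall>\<pi>\<in>ascending_tail_perms m k. perm_of_prefix m (map \<pi> [1..<Suc k]) = \<pi>"
      using prefix_of_ascending_tail_perm(3) assms by blast
    show "\<forall>xs\<in>L. map (perm_of_prefix m xs) [1..<Suc k] = xs"
      using perm_of_prefix(2) by (auto simp: L_def)
    show "(\<lambda>\<pi>. map \<pi> [1..<Suc k]) ` ascending_tail_perms m k \<subseteq> L"
    proof -
      have "length (map \<pi> [1..<Suc k]) = k" for \<pi> :: "nat \<Rightarrow> nat" by simp
      then show ?thesis
        unfolding L_def image_subset_iff mem_Collect_eq
        using prefix_of_ascending_tail_perm(1,2)[OF _ assms] by blast
    qed
    show "perm_of_prefix m ` L \<subseteq> ascending_tail_perms m k"
      using perm_of_prefix(1) by (auto simp: L_def)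
  qed
  then have "card (ascending_tail_perms m k) = card L" by (rule bij_betw_same_card)
  also have "\<dots> = \<Prod>{m - k + 1..m}"
    unfolding L_def using card_lists_distinct_length_eq[of "{1..m}" k] assms by simp
  also have "\<dots> = fact m div fact (m - k)" using fact_div_fact[of "m - k" m] by simp
  finally show ?thesis .
qed

lemma bnum_eq_fact_div:
  assumes "1 \<le> k" "k \<le> m"
  shows "int (bnum m k) = int (fact m div fact (m - k)) - int (fact m div fact (Suc m - k))"
proof -
  have sub: "ascending_tail_perms m (k - 1) \<subseteq> ascending_tail_perms m k"
    by (rule ascending_tail_perms_mono) simp
  have "{\<pi>. \<pi> permutes {1..m} \<and> last_descent m \<pi> = k}
      = ascending_tail_perms m k - ascending_tail_perms m (k - 1)"
    unfolding ascending_tail_perms_eq using assms by auto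
  then have "bnum m k = card (ascending_tail_perms m k) - card (ascending_tail_perms m (k - 1))"
    unfolding bnum_def using card_Diff_subset[OF finite_ascending_tail_perms sub] by simp
  moreover have "card (ascending_tail_perms m (k - 1)) \<le> card (ascending_tail_perms m k)"
    by (rule card_mono[OF finite_ascending_tail_perms sub])
  moreover have "Suc m - k = m - (k - 1)" using assms by simp
  ultimately show ?thesis
    using card_ascending_tail_perms[of k m] card_ascending_tail_perms[of "k - 1" m] assms by simp
qed

definition factorial_gap :: "nat \<Rightarrow> nat \<Rightarrow> int" where
  "factorial_gap n s = int (fact (Suc n) div fact s) - int (fact (Suc n) div fact (Suc s))"

lemma bnum_eq_factorial_gap: "j \<in> {1..n} \<Longrightarrow> int (bnum (Suc n) j) = factorial_gap n (Suc n - j)"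
  unfolding factorial_gap_def by (subst bnum_eq_fact_div) (auto simp: Suc_diff_le)

lemma sum_reflect: "(\<Sum>j\<in>{1..n}. f (Suc n - j)) = (\<Sum>s\<in>{1..n}. f s :: 'a::comm_monoid_add)"
  by (rule sum.reindex_bij_witness[where i="\<lambda>x. Suc n - x" and j="\<lambda>x. Suc n - x"]) auto

lemma sum_bnum: "(\<Sum>j\<in>{1..n}. int (bnum (Suc n) j)) = int (fact (Suc n)) - 1"
proof -
  have "(\<Sum>j\<in>{1..n}. int (bnum (Suc n) j)) = (\<Sum>j\<in>{1..n}. factorial_gap n (Suc n - j))"
    by (rule sum.cong) (simp_all add: bnum_eq_factorial_gap)
  also have "\<dots> = (\<Sum>s\<in>{1..n}. factorial_gap n s)"
    by (rule sum_reflect)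
  also have "\<dots> = - (\<Sum>s\<in>{1..n}. int (fact (Suc n) div fact (Suc s)) - int (fact (Suc n) div fact s))"
    by (simp add: factorial_gap_def sum_negf[symmetric])
  also have "\<dots> = int (fact (Suc n)) - 1"
    by (subst sum_Suc_diff) simp_all
  finally show ?thesis .
qed

section \<open>Interior lattice points of the factoradic parallelepiped\<close>

definition vol :: "nat \<Rightarrow> int" where
  "vol n = int (fact (Suc n))"

definition bcoord :: "nat \<Rightarrow> nat \<Rightarrow> int" where
  "bcoord n j = int (bnum (Suc n) j)"

text \<open>The lattice point with barycentric coordinates \<open>c_0 = t / vol n\<close> and
  \<open>c_j = frac (t b_j / vol n)\<close>, split into its first \<open>n\<close> coordinates and its height.\<close>
definition box_point :: "nat \<Rightarrow> nat \<Rightarrow> nat \<Rightarrow> int" where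
  "box_point n t = (\<lambda>j. if j \<in> {1..n} then - (int t * bcoord n j div vol n) else 0)"

definition box_height :: "nat \<Rightarrow> nat \<Rightarrow> int" where
  "box_height n t = int t - (\<Sum>j\<in>{1..n}. int t * bcoord n j div vol n)"

definition box_coeff :: "nat \<Rightarrow> nat \<Rightarrow> nat \<Rightarrow> real" where
  "box_coeff n t i =
     (if i = 0 then real t else real_of_int (int t * bcoord n i mod vol n)) / real_of_int (vol n)"

definition interior_params :: "nat \<Rightarrow> nat set" where
  "interior_params n = {t. 0 < t \<and> int t < vol n \<and> (\<forall>j\<in>{1..n}. int t * bcoord n j mod vol n \<noteq> 0)}"

lemma vol_pos: "vol n > 0"
  unfolding vol_def by (simp only: of_nat_0_less_iff fact_gt_zero)

lemma sum_bcoord: "(\<Sum>j\<in>{1..n}. bcoord n j) = vol n - 1"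
  using sum_bnum[of n] by (simp add: bcoord_def vol_def)

lemma sum_atMost_eq_0_plus:
  "(\<Sum>i\<le>n. c i) = c 0 + (\<Sum>j\<in>{1..n}. c j :: 'a::comm_monoid_add)" for n :: nat
proof -
  have "{..n} = insert 0 {1..n}" by auto
  then show ?thesis by simp
qed

lemma factoradic_vertex_combination:
  assumes "j \<in> {1..n}"
  shows "(\<Sum>i\<le>n. c i * real_of_int (factoradic_vertices n i j)) = c j - c 0 * real_of_int (bcoord n j)"
proof -
  have "(\<Sum>i\<in>{1..n}. c i * real_of_int (factoradic_vertices n i j)) = (\<Sum>i\<in>{1..n}. if i = j then c i else 0)"
    by (rule sum.cong) (use assms in \<open>auto simp: factoradic_vertices_def\<close>)
  also have "\<dots> = c j" using assms by (simp add: sum.delta)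
  finally show ?thesis
    using assms by (simp add: sum_atMost_eq_0_plus factoradic_vertices_def bcoord_def)
qed

text \<open>Only \<open>c_0\<close> survives because the vertex coordinates \<open>b_j\<close> sum to \<open>vol n - 1\<close>.\<close>
lemma barycentric_height_offset:
  assumes "\<forall>j\<in>{1..n}. real_of_int (y j) = (\<Sum>i\<le>n. c i * real_of_int (factoradic_vertices n i j))"
    and "real_of_int h = (\<Sum>i\<le>n. c i)"
  shows "real_of_int (h - (\<Sum>j\<in>{1..n}. y j)) = c 0 * real_of_int (vol n)"
proof -
  have "(\<Sum>j\<in>{1..n}. real_of_int (y j)) = (\<Sum>j\<in>{1..n}. c j - c 0 * real_of_int (bcoord n j))"
    using assms(1) by (intro sum.cong) (simp_all add: factoradic_vertex_combination)
  moreover have "(\<Sum>j\<in>{1..n}. real_of_int (bcoord n j)) = real_of_int (vol n) - 1"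
    using sum_bcoord[of n] by (metis of_int_1 of_int_diff of_int_sum)
  ultimately have "(\<Sum>j\<in>{1..n}. real_of_int (y j))
      = (\<Sum>j\<in>{1..n}. c j) - c 0 * (real_of_int (vol n) - 1)"
    by (simp add: sum_subtractf sum_distrib_left[symmetric])
  then show ?thesis
    using assms(2) by (simp add: sum_atMost_eq_0_plus algebra_simps)
qed

lemma eq_neg_div_if_between:
  fixes a y x :: int
  assumes "a > 0" "0 < a * y + x" "a * y + x < a"
  shows "y = - (x div a) \<and> x mod a \<noteq> 0"
proof -
  have "(x + y * a) div a = x div a + y" using assms(1) by simp
  moreover have "(x + y * a) div a = 0"
    using assms by (simp add: div_pos_pos_trivial algebra_simps)
  moreover have "(x + y * a) mod a = x mod a" by simp
  moreover have "(x + y * a) mod a = x + y * a"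
    by (rule mod_pos_pos_trivial) (use assms in \<open>simp_all add: algebra_simps\<close>)
  ultimately show ?thesis using assms(2) by (auto simp: algebra_simps)
qed

lemma vol_mult_box_height:
  "vol n * box_height n t = int t + (\<Sum>j\<in>{1..n}. int t * bcoord n j mod vol n)"
proof -
  have "vol n * box_height n t = vol n * int t - (\<Sum>j\<in>{1..n}. vol n * (int t * bcoord n j div vol n))"
    by (simp add: box_height_def algebra_simps sum_distrib_left)
  also have "(\<Sum>j\<in>{1..n}. vol n * (int t * bcoord n j div vol n))
      = (\<Sum>j\<in>{1..n}. int t * bcoord n j - int t * bcoord n j mod vol n)"
    by (rule sum.cong) (auto simp: minus_mod_eq_mult_div)
  also have "\<dots> = int t * (vol n - 1) - (\<Sum>j\<in>{1..n}. int t * bcoord n j mod vol n)"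
    using sum_bcoord[of n] by (simp add: sum_subtractf sum_distrib_left[symmetric])
  finally show ?thesis by (simp add: algebra_simps)
qed

lemma par_lattice_points_subset_box:
  "par_lattice_points n n (factoradic_vertices n) \<subseteq> (\<lambda>t. (box_point n t, box_height n t)) ` interior_params n"
proof
  fix p assume "p \<in> par_lattice_points n n (factoradic_vertices n)"
  then obtain y h c where p: "p = (y, h)" and y0: "\<forall>j. j \<notin> {1..n} \<longrightarrow> y j = 0"
    and c: "\<forall>i\<le>n. 0 < c i \<and> c i < 1"
    and yc: "\<forall>j\<in>{1..n}. real_of_int (y j) = (\<Sum>i\<le>n. c i * real_of_int (factoradic_vertices n i j))"
    and hc: "real_of_int h = (\<Sum>i\<le>n. c i)"
    by (cases p) (auto simp: par_lattice_points_def)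
  define t where "t = nat (h - (\<Sum>j\<in>{1..n}. y j))"
  have R: "real_of_int (vol n) > 0" using vol_pos[of n] by simp
  have tR: "real_of_int (h - (\<Sum>j\<in>{1..n}. y j)) = c 0 * real_of_int (vol n)"
    by (rule barycentric_height_offset[OF yc hc])
  then have "0 < real_of_int (h - (\<Sum>j\<in>{1..n}. y j))" "real_of_int (h - (\<Sum>j\<in>{1..n}. y j)) < real_of_int (vol n)"
    using c R by (auto simp: mult_less_cancel_right1)
  then have t: "int t = h - (\<Sum>j\<in>{1..n}. y j)" "0 < t" "int t < vol n"
    unfolding t_def by linarith+
  have yd: "y j = - (int t * bcoord n j div vol n) \<and> int t * bcoord n j mod vol n \<noteq> 0"
    if j: "j \<in> {1..n}" for j
  proof -
    have cj: "c j = real_of_int (y j) + c 0 * real_of_int (bcoord n j)"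
      using yc j factoradic_vertex_combination[OF j, of c] by simp
    have "real t = c 0 * real_of_int (vol n)" using tR t(1) by (metis of_int_of_nat_eq)
    then have "real_of_int (vol n * y j + int t * bcoord n j) = real_of_int (vol n) * c j"
      unfolding cj by (simp add: algebra_simps)
    then have "0 < real_of_int (vol n * y j + int t * bcoord n j)"
      "real_of_int (vol n * y j + int t * bcoord n j) < real_of_int (vol n)"
      using c j R by auto
    then show ?thesis
      by (intro eq_neg_div_if_between vol_pos) (simp_all only: of_int_0_less_iff of_int_less_iff)
  qed
  have "y = box_point n t" using y0 yd by (auto simp: box_point_def)
  moreover have "h = box_height n t"
  proof -
    have "(\<Sum>j\<in>{1..n}. y j) = (\<Sum>j\<in>{1..n}. - (int t * bcoord n j div vol n))"
      using yd by (intro sum.cong) auto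
    then show ?thesis using t(1) by (simp add: box_height_def sum_negf)
  qed
  moreover have "t \<in> interior_params n" using t yd by (auto simp: interior_params_def)
  ultimately show "p \<in> (\<lambda>t. (box_point n t, box_height n t)) ` interior_params n"
    unfolding p by blast
qed

lemma vol_mult_box_coeff:
  "real_of_int (vol n) * box_coeff n t i =
     (if i = 0 then real t else real_of_int (int t * bcoord n i mod vol n))"
  using vol_pos[of n] by (simp add: box_coeff_def)

lemma box_coeff_bounds:
  assumes "t \<in> interior_params n" "i \<le> n"
  shows "0 < box_coeff n t i \<and> box_coeff n t i < 1"
proof (cases "i = 0")
  case True
  then show ?thesis using assms vol_pos[of n] by (auto simp: box_coeff_def interior_params_def)
next
  case False
  then have "int t * bcoord n i mod vol n \<noteq> 0" using assms by (auto simp: interior_params_def)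
  moreover have "0 \<le> int t * bcoord n i mod vol n" "int t * bcoord n i mod vol n < vol n"
    using vol_pos[of n] by auto
  ultimately have "0 < real_of_int (int t * bcoord n i mod vol n)"
    "real_of_int (int t * bcoord n i mod vol n) < real_of_int (vol n)"
    by linarith+
  then show ?thesis using False by (simp add: box_coeff_def)
qed

lemma box_subset_par_lattice_points:
  "(\<lambda>t. (box_point n t, box_height n t)) ` interior_params n \<subseteq> par_lattice_points n n (factoradic_vertices n)"
proof clarify
  fix t assume t: "t \<in> interior_params n"
  let ?R = "real_of_int (vol n)" and ?c = "box_coeff n t"
  have R: "?R > 0" using vol_pos by simp
  have "real_of_int (box_point n t j) = (\<Sum>i\<le>n. ?c i * real_of_int (factoradic_vertices n i j))"
    if j: "j \<in> {1..n}" for j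
  proof -
    have "real_of_int (int t * bcoord n j)
        = ?R * real_of_int (int t * bcoord n j div vol n) + real_of_int (int t * bcoord n j mod vol n)"
      by (metis of_int_add of_int_mult mult_div_mod_eq)
    then have "?R * (?c j - ?c 0 * real_of_int (bcoord n j)) = ?R * real_of_int (box_point n t j)"
      using j vol_mult_box_coeff[of n t j] vol_mult_box_coeff[of n t 0]
      by (simp add: box_point_def right_diff_distrib mult.assoc[symmetric])
    then show ?thesis
      using R by (simp add: factoradic_vertex_combination[OF j])
  qed
  moreover have "real_of_int (box_height n t) = (\<Sum>i\<le>n. ?c i)"
  proof -
    have "?R * (\<Sum>i\<le>n. ?c i) = real t + (\<Sum>j\<in>{1..n}. real_of_int (int t * bcoord n j mod vol n))"
      by (simp add: sum_atMost_eq_0_plus distrib_left sum_distrib_left vol_mult_box_coeff)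
    also have "\<dots> = ?R * real_of_int (box_height n t)"
      using vol_mult_box_height[of n t] by (simp flip: of_int_mult)
    finally show ?thesis using R by simp
  qed
  moreover have "\<forall>i\<le>n. 0 < ?c i \<and> ?c i < 1" using box_coeff_bounds[OF t] by blast
  moreover have "\<forall>j. j \<notin> {1..n} \<longrightarrow> box_point n t j = 0" by (simp add: box_point_def)
  ultimately show "(box_point n t, box_height n t) \<in> par_lattice_points n n (factoradic_vertices n)"
    unfolding par_lattice_points_def by blast
qed

lemma inj_on_box: "inj_on (\<lambda>t. (box_point n t, box_height n t)) A"
proof (rule inj_onI)
  fix t t' assume eq: "(box_point n t, box_height n t) = (box_point n t', box_height n t')"
  have "int t = box_height n t - (\<Sum>j\<in>{1..n}. box_point n t j)" for t
    by (simp add: box_height_def box_point_def sum_negf)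
  then show "t = t'" using eq by (metis of_nat_eq_iff prod.inject)
qed

lemma ell_star_factoradic_eq:
  "ell_star n n (factoradic_vertices n) = (\<Sum>t\<in>interior_params n. monom 1 (nat (box_height n t)))"
proof -
  have "par_lattice_points n n (factoradic_vertices n)
      = (\<lambda>t. (box_point n t, box_height n t)) ` interior_params n"
    using par_lattice_points_subset_box box_subset_par_lattice_points by (rule antisym)
  then show ?thesis
    unfolding ell_star_def by (simp add: sum.reindex[OF inj_on_box] comp_def)
qed

section \<open>Heights through factoradic comparisons\<close>

definition scaled_residue :: "nat \<Rightarrow> nat \<Rightarrow> nat \<Rightarrow> int" where
  "scaled_residue n s t = int (fact (Suc n) div fact s) * int (t mod fact s)"

lemma scaled_residue_eq_mod:
  assumes "s \<le> Suc n"
  shows "scaled_residue n s t = int t * int (fact (Suc n) div fact s) mod vol n"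
proof -
  define K where "K = fact (Suc n) div (fact s :: nat)"
  have KN: "fact s * K = fact (Suc n)"
    unfolding K_def by (rule dvd_mult_div_cancel, rule fact_dvd[OF assms])
  have "t * K = (t div fact s * fact s + t mod fact s) * K" by simp
  also have "\<dots> = t div fact s * (fact s * K) + K * (t mod fact s)" by (simp only: algebra_simps)
  finally have "int t * int K = int (K * (t mod fact s)) + vol n * int (t div fact s)"
    unfolding KN vol_def by (simp only: of_nat_mult[symmetric] of_nat_add[symmetric] ac_simps)
  moreover have "K > 0" using KN by (metis fact_gt_zero mult_0_right neq0_conv less_not_refl)
  then have "K * (t mod fact s) < K * fact s" by simp
  then have "int (K * (t mod fact s)) < vol n"
    unfolding vol_def KN[symmetric] by (simp only: of_nat_less_iff mult.commute)
  ultimately show ?thesis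
    unfolding scaled_residue_def K_def[symmetric] by (simp add: mod_pos_pos_trivial)
qed

lemma scaled_residue_bounds: "s \<le> Suc n \<Longrightarrow> 0 \<le> scaled_residue n s t \<and> scaled_residue n s t < vol n"
  using scaled_residue_eq_mod vol_pos by simp

lemma scaled_residue_1: "scaled_residue n 1 t = 0"
  by (simp add: scaled_residue_def)

lemma scaled_residue_Suc: "t < fact (Suc n) \<Longrightarrow> scaled_residue n (Suc n) t = int t"
  by (simp add: scaled_residue_def del: fact_Suc)

lemma mod_diff_in_range:
  fixes a b N :: int
  assumes "0 \<le> a" "a < N" "0 \<le> b" "b < N"
  shows "(a - b) mod N = (if b \<le> a then a - b else a - b + N)"
proof (cases "b \<le> a")
  case False
  have "(a - b) mod N = (a - b + N) mod N" by simp
  also have "\<dots> = a - b + N" using assms False by (intro mod_pos_pos_trivial) auto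
  finally show ?thesis using False by simp
qed (use assms in \<open>simp add: mod_pos_pos_trivial\<close>)

lemma bcoord_mod_vol:
  assumes "s \<in> {1..n}"
  shows "int t * bcoord n (Suc n - s) mod vol n =
    (let a = scaled_residue n s t; b = scaled_residue n (Suc s) t in
     if b \<le> a then a - b else a - b + vol n)"
proof -
  have "Suc n - s \<in> {1..n}" using assms by auto
  then have "bcoord n (Suc n - s) = factorial_gap n s"
    using assms bnum_eq_factorial_gap[of "Suc n - s" n] by (simp add: bcoord_def)
  then have "int t * bcoord n (Suc n - s) mod vol n
      = (scaled_residue n s t - scaled_residue n (Suc s) t) mod vol n"
    using assms by (simp add: factorial_gap_def right_diff_distrib scaled_residue_eq_mod mod_diff_eq)
  then show ?thesis
    using scaled_residue_bounds[of s n t] scaled_residue_bounds[of "Suc s" n t] assms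
    by (simp add: mod_diff_in_range Let_def)
qed

text \<open>\<open>digit_weight s t\<close> compares \<open>G_s = scaled_residue n s t\<close> with \<open>G_(s+1)\<close>
  after cancelling the common factor \<open>(n+1)!/(s+1)!\<close>, which makes it independent of \<open>n\<close>.\<close>
definition digit_weight :: "nat \<Rightarrow> nat \<Rightarrow> real poly" where
  "digit_weight s t = (let a = Suc s * (t mod fact s); b = t mod fact (Suc s) in
     if a = b then 0 else if a < b then X else 1)"

lemma digit_weight_eq:
  assumes "s \<le> n"
  shows "digit_weight s t = (let a = scaled_residue n s t; b = scaled_residue n (Suc s) t in
     if a = b then 0 else if a < b then X else 1)"
proof -
  define K where "K = fact (Suc n) div (fact (Suc s) :: nat)"
  have KN: "K * fact (Suc s) = fact (Suc n)"
    unfolding K_def by (rule dvd_div_mult_self, rule fact_dvd) (use assms in simp)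
  then have "K > 0" by (metis fact_gt_zero mult_is_0 neq0_conv less_not_refl)
  have "fact (Suc n) = (K * Suc s) * (fact s :: nat)"
    using KN by (simp add: algebra_simps)
  then have "fact (Suc n) div fact s = K * Suc s"
    by (metis fact_gt_zero nonzero_mult_div_cancel_right less_not_refl)
  then have G: "scaled_residue n s t = int (K * (Suc s * (t mod fact s)))"
    "scaled_residue n (Suc s) t = int (K * (t mod fact (Suc s)))"
    unfolding scaled_residue_def K_def by (simp_all only: of_nat_mult[symmetric] mult.assoc)
  show ?thesis
    unfolding digit_weight_def Let_def G of_nat_less_iff of_nat_eq_iff
    using \<open>K > 0\<close> by simp
qed

lemma prod_if_zero_X:
  assumes "finite S"
  shows "(\<Prod>s\<in>S. if P s then 0 else if Q s then X else 1) =
         (if \<exists>s\<in>S. P s then 0 else monom 1 (card {s\<in>S. Q s}))"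
  using assms
proof (induction S rule: finite_induct)
  case empty
  then show ?case by (simp add: monom_0 one_pCons)
next
  case (insert x F)
  show ?case
  proof (cases "Q x")
    case True
    then have "{s \<in> insert x F. Q s} = insert x {s\<in>F. Q s}" by auto
    then have "card {s \<in> insert x F. Q s} = Suc (card {s\<in>F. Q s})" using insert by simp
    then show ?thesis using insert True by (simp add: mult_monom)
  next
    case False
    then have "{s \<in> insert x F. Q s} = {s\<in>F. Q s}" by auto
    then show ?thesis using insert False by simp
  qed
qed

lemma prod_digit_weight:
  "(\<Prod>s\<in>{1..n}. digit_weight s t) =
     (if \<exists>s\<in>{1..n}. scaled_residue n s t = scaled_residue n (Suc s) t then 0
      else monom 1 (card {s\<in>{1..n}. scaled_residue n s t < scaled_residue n (Suc s) t}))"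
proof -
  let ?G = "\<lambda>s. scaled_residue n s t"
  have "(\<Prod>s\<in>{1..n}. digit_weight s t)
      = (\<Prod>s\<in>{1..n}. if ?G s = ?G (Suc s) then 0 else if ?G s < ?G (Suc s) then X else 1)"
    by (intro prod.cong) (auto simp: digit_weight_eq Let_def)
  also have "\<dots> = (if \<exists>s\<in>{1..n}. ?G s = ?G (Suc s) then 0
      else monom 1 (card {s\<in>{1..n}. ?G s < ?G (Suc s)}))"
    by (rule prod_if_zero_X) simp
  finally show ?thesis .
qed

lemma ball_reflect: "(\<forall>j\<in>{1..n}. P (Suc n - j)) \<longleftrightarrow> (\<forall>s\<in>{1..n}. P s)"
proof -
  have "(\<lambda>j. Suc n - j) ` {1..n} = {1..n}"
  proof
    show "{1..n} \<subseteq> (\<lambda>j. Suc n - j) ` {1..n}"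
    proof
      fix s assume "s \<in> {1..n}"
      then show "s \<in> (\<lambda>j. Suc n - j) ` {1..n}" by (intro image_eqI[of _ _ "Suc n - s"]) auto
    qed
  qed auto
  then show ?thesis using ball_simps(9)[of "\<lambda>j. Suc n - j" "{1..n}" P] by simp
qed

lemma interior_params_less_fact: "t \<in> interior_params n \<Longrightarrow> t < fact (Suc n)"
  unfolding interior_params_def vol_def by (simp del: of_nat_fact fact_Suc)

lemma interior_params_iff:
  assumes "t < fact (Suc n)" "1 \<le> n"
  shows "t \<in> interior_params n \<longleftrightarrow> (\<forall>s\<in>{1..n}. scaled_residue n s t \<noteq> scaled_residue n (Suc s) t)"
proof (cases "t = 0")
  case True
  then show ?thesis using assms by (auto simp: interior_params_def scaled_residue_def)
next
  case False
  have "(\<forall>j\<in>{1..n}. int t * bcoord n j mod vol n \<noteq> 0)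
      \<longleftrightarrow> (\<forall>s\<in>{1..n}. int t * bcoord n (Suc n - s) mod vol n \<noteq> 0)"
    using ball_reflect[of n "\<lambda>j. int t * bcoord n j mod vol n \<noteq> 0"] by simp
  also have "\<dots> \<longleftrightarrow> (\<forall>s\<in>{1..n}. scaled_residue n s t \<noteq> scaled_residue n (Suc s) t)"
  proof (rule ball_cong[OF refl])
    fix s assume "s \<in> {1..n}"
    then show "int t * bcoord n (Suc n - s) mod vol n \<noteq> 0
        \<longleftrightarrow> scaled_residue n s t \<noteq> scaled_residue n (Suc s) t"
      using scaled_residue_bounds[of s n t] scaled_residue_bounds[of "Suc s" n t]
      by (auto simp: bcoord_mod_vol Let_def)
  qed
  finally show ?thesis
    using False assms(1) by (simp add: interior_params_def vol_def del: of_nat_fact fact_Suc)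
qed

lemma box_height_eq_card:
  assumes "t \<in> interior_params n" "1 \<le> n"
  shows "box_height n t = int (card {s\<in>{1..n}. scaled_residue n s t < scaled_residue n (Suc s) t})"
proof -
  let ?G = "\<lambda>s. scaled_residue n s t"
  have t: "t < fact (Suc n)" using assms(1) by (rule interior_params_less_fact)
  have ne: "\<forall>s\<in>{1..n}. ?G s \<noteq> ?G (Suc s)" using interior_params_iff[OF t assms(2)] assms(1) by blast
  have "(\<Sum>j\<in>{1..n}. int t * bcoord n j mod vol n) = (\<Sum>s\<in>{1..n}. int t * bcoord n (Suc n - s) mod vol n)"
    by (rule sum_reflect[symmetric])
  also have "\<dots> = (\<Sum>s\<in>{1..n}. (?G s - ?G (Suc s)) + (if ?G s < ?G (Suc s) then vol n else 0))"
    using ne by (intro sum.cong) (auto simp: bcoord_mod_vol Let_def)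
  also have "\<dots> = - (\<Sum>s\<in>{1..n}. ?G (Suc s) - ?G s) + (\<Sum>s\<in>{1..n}. if ?G s < ?G (Suc s) then vol n else 0)"
    by (simp add: sum.distrib sum_negf[symmetric])
  also have "(\<Sum>s\<in>{1..n}. if ?G s < ?G (Suc s) then vol n else 0) = (\<Sum>s\<in>{s\<in>{1..n}. ?G s < ?G (Suc s)}. vol n)"
    by (rule sum.inter_filter[symmetric]) simp
  also have "(\<Sum>s\<in>{1..n}. ?G (Suc s) - ?G s) = ?G (Suc n) - ?G 1"
    by (rule sum_Suc_diff) simp
  also have "\<dots> = int t"
    using scaled_residue_1[of n t] scaled_residue_Suc[OF t] by simp
  finally have "vol n * box_height n t = vol n * int (card {s\<in>{1..n}. ?G s < ?G (Suc s)})"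
    using vol_mult_box_height[of n t] by simp
  then show ?thesis using vol_pos[of n] by simp
qed

lemma sum_prod_digit_weight_eq_ell_star:
  assumes "1 \<le> n"
  shows "(\<Sum>t<fact (Suc n). \<Prod>s\<in>{1..n}. digit_weight s t) = ell_star n n (factoradic_vertices n)"
proof -
  have "interior_params n \<subseteq> {..<fact (Suc n)}"
    using interior_params_less_fact by blast
  then have "(\<Sum>t\<in>interior_params n. monom 1 (nat (box_height n t)))
      = (\<Sum>t<fact (Suc n). if t \<in> interior_params n then monom 1 (nat (box_height n t)) else 0)"
    by (simp add: sum.If_cases Int_absorb1)
  also have "\<dots> = (\<Sum>t<fact (Suc n). \<Prod>s\<in>{1..n}. digit_weight s t)"
  proof (rule sum.cong[OF refl])
    fix t :: nat assume "t \<in> {..<fact (Suc n)}"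
    then show "(if t \<in> interior_params n then monom 1 (nat (box_height n t)) else 0)
        = (\<Prod>s\<in>{1..n}. digit_weight s t)"
      unfolding prod_digit_weight
      using interior_params_iff[of t n] box_height_eq_card[of t n] assms by auto
  qed
  finally show ?thesis by (simp add: ell_star_factoradic_eq)
qed

section \<open>The ascent polynomial and its \<open>\<gamma>\<close>-nonnegativity\<close>

text \<open>\<open>ascent_poly n s j\<close> enumerates the sequences \<open>j = j_s, j_(s+1), \<dots>, j_n\<close> with \<open>j_i \<le> i\<close>,
  with \<open>z\<close> marking each ascent \<open>j_(i-1) < j_i\<close>.\<close>
function ascent_poly :: "nat \<Rightarrow> nat \<Rightarrow> nat \<Rightarrow> real poly" where
  "ascent_poly n s j =
     (if n \<le> s then 1 else (\<Sum>k\<le>Suc s. (if j < k then X else 1) * ascent_poly n (Suc s) k))"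
  by auto
termination by (relation "measure (\<lambda>(n, s, j). n - s)") auto

declare ascent_poly.simps[simp del]

lemma ascent_poly_step:
  "s < n \<Longrightarrow> ascent_poly n s j = (\<Sum>k\<le>Suc s. (if j < k then X else 1) * ascent_poly n (Suc s) k)"
  by (subst ascent_poly.simps) simp

lemma ascent_poly_top: "n \<le> s \<Longrightarrow> ascent_poly n s j = 1"
  by (subst ascent_poly.simps) simp

lemma smult_2: "smult 2 p = p + (p :: real poly)"
  by (metis one_add_one smult_add_left smult_1_left)

lemma sum_atMost_symmetrize:
  fixes f :: "nat \<Rightarrow> real poly"
  shows "(\<Sum>k\<le>m. f k) = smult (1/2) (\<Sum>k\<le>m. f k + f (m - k))"
proof -
  have "(\<Sum>k\<le>m. f (m - k)) = (\<Sum>k\<le>m. f k)"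
    using sum.atLeastAtMost_rev[of f 0 m] by (simp add: atLeast0AtMost)
  then have "(\<Sum>k\<le>m. f k + f (m - k)) = smult 2 (\<Sum>k\<le>m. f k)"
    by (simp add: sum.distrib smult_2)
  then show ?thesis by simp
qed

text \<open>Both steps expand level \<open>s\<close> into level \<open>s + 1\<close> and pair the summands \<open>k\<close> and
  \<open>s + 1 - k\<close>. Depending on where \<open>k\<close> lies relative to \<open>j\<close> and \<open>s - j\<close>, each pair is
  \<open>2\<close>, \<open>1 + z\<close> or \<open>2z\<close> times one of the two expressions at level \<open>s + 1\<close>.\<close>
context
  fixes n s :: nat
  assumes s_less: "s < n"
    and sym_Suc: "\<And>k. k \<le> Suc s \<Longrightarrow>
      gamma_nonneg (n - Suc s) (ascent_poly n (Suc s) k + ascent_poly n (Suc s) (Suc s - k))"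
    and shift_Suc: "\<And>k. 2 * k < Suc s \<Longrightarrow>
      gamma_nonneg (n - s) (ascent_poly n (Suc s) k + X * ascent_poly n (Suc s) (Suc s - k))"
begin

lemma ascent_poly_sym_step:
  assumes j: "2 * j \<le> s"
  shows "gamma_nonneg (n - s) (ascent_poly n s j + ascent_poly n s (s - j))"
proof -
  let ?E = "ascent_poly n (Suc s)"
  define c where "c k = (if j < k then X else 1) + (if s - j < k then X else 1)" for k
  define pair where "pair k = c k * ?E k + c (Suc s - k) * ?E (Suc s - k)" for k
  have "ascent_poly n s j + ascent_poly n s (s - j) = (\<Sum>k\<le>Suc s. c k * ?E k)"
    by (simp only: ascent_poly_step[OF s_less] c_def distrib_right sum.distrib)
  also have "\<dots> = smult (1/2) (\<Sum>k\<le>Suc s. pair k)"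
    unfolding pair_def by (rule sum_atMost_symmetrize)
  finally have eq: "ascent_poly n s j + ascent_poly n s (s - j) = \<dots>" .
  have low: "gamma_nonneg (n - s) (pair k)" if "k \<le> j" for k
  proof -
    have "c k = 1 + 1" "c (Suc s - k) = X + X" using that j by (auto simp: c_def)
    then have "pair k = smult 2 (?E k + X * ?E (Suc s - k))"
      by (simp only: pair_def smult_2 ring_distribs mult_1_left add_ac)
    then show ?thesis
      using shift_Suc[of k] that j by (simp add: gamma_nonneg_smult)
  qed
  have mid: "gamma_nonneg (n - s) (pair k)" if "j < k" "k \<le> s - j" for k
  proof -
    have "c k = X + 1" "c (Suc s - k) = 1 + X" using that by (auto simp: c_def)
    then have "pair k = [:1, 1:] * (?E k + ?E (Suc s - k))"
      by (simp only: pair_def one_plus_X ring_distribs add_ac)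
    then show ?thesis
      using gamma_nonneg_mult_1_plus_X[OF sym_Suc[of k]] that s_less by (simp add: Suc_diff_Suc)
  qed
  have "gamma_nonneg (n - s) (pair k)" if "k \<le> Suc s" for k
  proof -
    consider "k \<le> j" | "j < k" "k \<le> s - j" | "Suc s - k \<le> j" using that by linarith
    then show ?thesis
    proof cases
      case 3
      moreover have "pair k = pair (Suc s - k)" using that by (simp add: pair_def add.commute)
      ultimately show ?thesis using low by simp
    qed (use low mid in auto)
  qed
  then show ?thesis unfolding eq by (intro gamma_nonneg_smult gamma_nonneg_sum) auto
qed

lemma ascent_poly_shift_step:
  assumes j: "2 * j < s"
  shows "gamma_nonneg (n - s + 1) (ascent_poly n s j + X * ascent_poly n s (s - j))"
proof -
  let ?E = "ascent_poly n (Suc s)"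
  define c where "c k = (if j < k then X else 1) + X * (if s - j < k then X else 1)" for k
  define pair where "pair k = c k * ?E k + c (Suc s - k) * ?E (Suc s - k)" for k
  have "ascent_poly n s j + X * ascent_poly n s (s - j) = (\<Sum>k\<le>Suc s. c k * ?E k)"
    by (simp only: ascent_poly_step[OF s_less] c_def distrib_right sum.distrib
        sum_distrib_left mult.assoc)
  also have "\<dots> = smult (1/2) (\<Sum>k\<le>Suc s. pair k)"
    unfolding pair_def by (rule sum_atMost_symmetrize)
  finally have eq: "ascent_poly n s j + X * ascent_poly n s (s - j) = \<dots>" .
  have low: "gamma_nonneg (n - s + 1) (pair k)" if "k \<le> j" for k
  proof -
    have "c k = 1 + X * 1" "c (Suc s - k) = X + X * X" using that j by (auto simp: c_def)
    then have "pair k = [:1, 1:] * (?E k + X * ?E (Suc s - k))"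
      by (simp only: pair_def one_plus_X ring_distribs mult_1_left mult_1_right add_ac mult.assoc)
    then show ?thesis
      using gamma_nonneg_mult_1_plus_X[OF shift_Suc[of k]] that j by simp
  qed
  have mid: "gamma_nonneg (n - s + 1) (pair k)" if "j < k" "k \<le> s - j" for k
  proof -
    have "c k = X + X * 1" "c (Suc s - k) = X + X * 1" using that by (auto simp: c_def)
    then have "pair k = smult 2 (X * (?E k + ?E (Suc s - k)))"
      by (simp only: pair_def smult_2 ring_distribs mult_1_right add_ac)
    moreover have "n - Suc s + 2 = n - s + 1" using s_less by simp
    ultimately show ?thesis
      using gamma_nonneg_mult_X[OF sym_Suc[of k]] that by (simp add: gamma_nonneg_smult)
  qed
  have "gamma_nonneg (n - s + 1) (pair k)" if "k \<le> Suc s" for k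
  proof -
    consider "k \<le> j" | "j < k" "k \<le> s - j" | "Suc s - k \<le> j" using that by linarith
    then show ?thesis
    proof cases
      case 3
      moreover have "pair k = pair (Suc s - k)" using that by (simp add: pair_def add.commute)
      ultimately show ?thesis using low by simp
    qed (use low mid in auto)
  qed
  then show ?thesis unfolding eq by (intro gamma_nonneg_smult gamma_nonneg_sum) auto
qed

end

lemma gamma_nonneg_ascent_poly:
  assumes "s \<le> n"
  shows "(\<forall>j\<le>s. gamma_nonneg (n - s) (ascent_poly n s j + ascent_poly n s (s - j))) \<and>
    (\<forall>j. 2 * j < s \<longrightarrow> gamma_nonneg (n - s + 1) (ascent_poly n s j + X * ascent_poly n s (s - j)))"
  using assms
proof (induction "n - s" arbitrary: s)
  case 0
  then have "n = s" by simp
  have "gamma_nonneg 0 (1 + 1)" using gamma_nonneg_const[of 2] by (simp add: numeral_poly)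
  moreover have "gamma_nonneg 1 (1 + X)" using gamma_nonneg_1_plus_X by (simp only: one_plus_X)
  ultimately show ?case using \<open>n = s\<close> by (simp add: ascent_poly_top)
next
  case (Suc m)
  then have s: "s < n" by simp
  with Suc.hyps have IH:
    "\<And>k. k \<le> Suc s \<Longrightarrow>
      gamma_nonneg (n - Suc s) (ascent_poly n (Suc s) k + ascent_poly n (Suc s) (Suc s - k))"
    "\<And>k. 2 * k < Suc s \<Longrightarrow>
      gamma_nonneg (n - s) (ascent_poly n (Suc s) k + X * ascent_poly n (Suc s) (Suc s - k))"
    using Suc.hyps(1)[of "Suc s"] by (auto simp: Suc_diff_Suc)
  have "gamma_nonneg (n - s) (ascent_poly n s j + ascent_poly n s (s - j))" if "j \<le> s" for j
  proof (cases "2 * j \<le> s")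
    case True
    show ?thesis by (rule ascent_poly_sym_step[OF s IH]) (use True in auto)
  next
    case False
    then have "2 * (s - j) \<le> s" "s - (s - j) = j" using that by auto
    moreover have "gamma_nonneg (n - s) (ascent_poly n s (s - j) + ascent_poly n s (s - (s - j)))"
      by (rule ascent_poly_sym_step[OF s IH]) (use \<open>2 * (s - j) \<le> s\<close> in auto)
    ultimately show ?thesis by (simp add: add.commute)
  qed
  moreover have "gamma_nonneg (n - s + 1) (ascent_poly n s j + X * ascent_poly n s (s - j))"
    if "2 * j < s" for j
    by (rule ascent_poly_shift_step[OF s IH]) (use that in auto)
  ultimately show ?case by blast
qed

section \<open>Summing over the factoradic digits\<close>

text \<open>\<open>digit_tree_poly n s r\<close> is the sum of \<open>\<Prod>s'\<in>{s..n}. digit_weight s' t\<close> over the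
  \<open>t < (n+1)!\<close> with \<open>t mod s! = r\<close>; one level of the recursion chooses the digit \<open>d\<close> of \<open>s!\<close>.\<close>
function digit_tree_poly :: "nat \<Rightarrow> nat \<Rightarrow> nat \<Rightarrow> real poly" where
  "digit_tree_poly n s r = (if n < s then 1 else
     (\<Sum>d\<le>s. digit_weight s (d * fact s + r) * digit_tree_poly n (Suc s) (d * fact s + r)))"
  by auto
termination by (relation "measure (\<lambda>(n, s, r). Suc n - s)") auto

declare digit_tree_poly.simps[simp del]

lemma digit_tree_poly_step:
  "s \<le> n \<Longrightarrow> digit_tree_poly n s r =
     (\<Sum>d\<le>s. digit_weight s (d * fact s + r) * digit_tree_poly n (Suc s) (d * fact s + r))"
  by (subst digit_tree_poly.simps) simp

lemma digit_tree_poly_top: "n < s \<Longrightarrow> digit_tree_poly n s r = 1"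
  by (subst digit_tree_poly.simps) simp

lemma sum_lessThan_mult:
  fixes f :: "nat \<Rightarrow> 'a::comm_monoid_add"
  shows "(\<Sum>u<a * b. f u) = (\<Sum>r<b. \<Sum>d<a. f (d * b + r))"
proof (induction a)
  case (Suc a)
  have "(\<Sum>u<Suc a * b. f u) = (\<Sum>u<a * b. f u) + (\<Sum>u\<in>{a * b..<a * b + b}. f u)"
    by (simp add: sum.atLeastLessThan_concat[symmetric] lessThan_atLeast0 add.commute)
  also have "(\<Sum>u\<in>{a * b..<a * b + b}. f u) = (\<Sum>r<b. f (a * b + r))"
    by (simp add: sum.shift_bounds_nat_ivl[where k="a * b" and m=0, simplified]
        lessThan_atLeast0 add.commute)
  finally show ?case by (simp add: Suc sum.distrib)
qed simp

lemma digit_weight_add_fact: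
  assumes "s' < s"
  shows "digit_weight s' (d * fact s + r) = digit_weight s' r"
proof -
  have "(d * fact s + r) mod m = r mod m" if "m dvd fact s" for m :: nat
    using that by (metis dvd_imp_mod_0 dvd_mult mod_add_left_eq add_0)
  then show ?thesis
    using assms by (simp add: digit_weight_def fact_dvd del: fact_Suc)
qed

lemma sum_prod_digit_weight_eq_digit_tree:
  assumes "1 \<le> s" "s \<le> Suc n"
  shows "(\<Sum>t<fact (Suc n). \<Prod>s'\<in>{1..n}. digit_weight s' t) =
    (\<Sum>r<fact s. (\<Prod>s'\<in>{1..<s}. digit_weight s' r) * digit_tree_poly n s r)"
  using assms
proof (induction "Suc n - s" arbitrary: s)
  case 0
  then have "s = Suc n" by simp
  then show ?case by (simp add: digit_tree_poly_top atLeastLessThanSuc_atLeastAtMost)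
next
  case (Suc m)
  then have s: "s \<le> n" by simp
  have "(\<Sum>t<fact (Suc n). \<Prod>s'\<in>{1..n}. digit_weight s' t)
      = (\<Sum>u<fact (Suc s). (\<Prod>s'\<in>{1..<Suc s}. digit_weight s' u) * digit_tree_poly n (Suc s) u)"
    using Suc.hyps(1)[of "Suc s"] Suc.hyps(2) Suc.prems s by simp
  also have "\<dots> = (\<Sum>r<fact s. \<Sum>d<Suc s. (\<Prod>s'\<in>{1..<Suc s}. digit_weight s' (d * fact s + r))
      * digit_tree_poly n (Suc s) (d * fact s + r))"
    by (simp only: fact_Suc[of s] of_nat_id sum_lessThan_mult)
  also have "\<dots> = (\<Sum>r<fact s. (\<Prod>s'\<in>{1..<s}. digit_weight s' r) * digit_tree_poly n s r)"
  proof (rule sum.cong[OF refl])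
    fix r
    have "(\<Prod>s'\<in>{1..<s}. digit_weight s' (d * fact s + r)) = (\<Prod>s'\<in>{1..<s}. digit_weight s' r)"
      for d by (rule prod.cong) (simp_all add: digit_weight_add_fact)
    moreover have "{1..<Suc s} = insert s {1..<s}" using Suc.prems by auto
    ultimately have "(\<Prod>s'\<in>{1..<Suc s}. digit_weight s' (d * fact s + r))
        = (\<Prod>s'\<in>{1..<s}. digit_weight s' r) * digit_weight s (d * fact s + r)" for d
      by (simp add: mult.commute)
    then show "(\<Sum>d<Suc s. (\<Prod>s'\<in>{1..<Suc s}. digit_weight s' (d * fact s + r))
        * digit_tree_poly n (Suc s) (d * fact s + r))
        = (\<Prod>s'\<in>{1..<s}. digit_weight s' r) * digit_tree_poly n s r"
      by (simp add: digit_tree_poly_step[OF s] sum_distrib_left lessThan_Suc_atMost mult.assoc)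
  qed
  finally show ?case .
qed

lemma add_mult_fact_less_fact_Suc: "d \<le> s \<Longrightarrow> r < fact s \<Longrightarrow> d * fact s + r < fact (Suc s)"
proof -
  assume "d \<le> s" "r < fact s"
  then have "d * fact s + r < Suc d * fact s" by simp
  also have "\<dots> \<le> Suc s * fact s" using \<open>d \<le> s\<close> by (intro mult_right_mono) auto
  finally show ?thesis by (simp add: fact_Suc)
qed

text \<open>For odd \<open>t\<close> no comparison ties: \<open>(s+1) (t mod s!) = t mod (s+1)!\<close> would force
  \<open>t mod s!\<close> to be a multiple of \<open>(s-1)!\<close>, which is even.\<close>
lemma digit_weight_odd:
  assumes "3 \<le> s" "d \<le> s" "r < fact s" "odd r"
  shows "digit_weight s (d * fact s + r) = (if r div fact (s - 1) < d then X else 1)"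
proof -
  obtain s0 where s0: "s = Suc s0" using assms(1) by (cases s) auto
  have fs: "fact s = s * fact s0" using s0 by simp
  have "(d * fact s + r) mod fact s = r" using assms by simp
  moreover have "(d * fact s + r) mod fact (Suc s) = d * fact s + r"
    using add_mult_fact_less_fact_Suc[OF assms(2,3)] by simp
  moreover have "Suc s * r \<noteq> d * fact s + r"
  proof
    assume "Suc s * r = d * fact s + r"
    then have "s * r = s * (d * fact s0)" using fs by (simp add: algebra_simps)
    then have "r = d * fact s0" using assms by simp
    moreover have "even (fact s0 :: nat)" using assms s0 by (intro dvd_fact) auto
    ultimately show False using assms by simp
  qed
  moreover have "Suc s * r < d * fact s + r \<longleftrightarrow> r div fact s0 < d"
  proof -
    have "Suc s * r < d * fact s + r \<longleftrightarrow> s * r < s * (d * fact s0)" using fs by (simp add: algebra_simps)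
    also have "\<dots> \<longleftrightarrow> r < d * fact s0" using assms by simp
    also have "\<dots> \<longleftrightarrow> r div fact s0 < d" by (simp add: div_less_iff_less_mult)
    finally show ?thesis .
  qed
  ultimately show ?thesis unfolding digit_weight_def Let_def using s0 by simp
qed

lemma digit_tree_poly_eq_ascent_poly:
  assumes "3 \<le> s" "s \<le> Suc n" "r < fact s" "odd r"
  shows "digit_tree_poly n s r = ascent_poly n (s - 1) (r div fact (s - 1))"
  using assms
proof (induction "Suc n - s" arbitrary: s r)
  case 0
  then show ?case by (simp add: digit_tree_poly_top ascent_poly_top)
next
  case (Suc m)
  then have s: "s \<le> n" by simp
  have "digit_tree_poly n (Suc s) (d * fact s + r) = ascent_poly n s d" if "d \<le> s" for d
  proof -
    have "even (fact s :: nat)" using Suc.prems by (intro dvd_fact) auto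
    then have "odd (d * fact s + r)" using Suc.prems by simp
    moreover have "(d * fact s + r) div fact s = d" using Suc.prems by simp
    ultimately show ?thesis
      using Suc.hyps(1)[of "Suc s" "d * fact s + r"] Suc.hyps(2) Suc.prems s
        add_mult_fact_less_fact_Suc[OF that] by simp
  qed
  then have "digit_tree_poly n s r = (\<Sum>d\<le>s. (if r div fact (s - 1) < d then X else 1) * ascent_poly n s d)"
    using Suc.prems by (simp add: digit_tree_poly_step[OF s] digit_weight_odd)
  also have "\<dots> = ascent_poly n (s - 1) (r div fact (s - 1))"
    using Suc.prems s by (cases s) (simp_all add: ascent_poly_step)
  finally show ?case .
qed

text \<open>The residues \<open>t mod 3! \<in> {1, 5}\<close> are the only ones not killed by a tie at \<open>s = 1, 2\<close>.\<close>
lemma digit_tree_poly_root: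
  assumes "2 \<le> n"
  shows "digit_tree_poly n 1 0 = X * (ascent_poly n 2 0 + X * ascent_poly n 2 2)"
proof -
  have digits: "{..1::nat} = {0, 1}" "{..2::nat} = {0, 1, 2}" by auto
  have weights: "digit_weight 1 0 = 0" "digit_weight 1 1 = X" "digit_weight 2 1 = 1"
    "digit_weight 2 3 = 0" "digit_weight 2 5 = X"
    by (simp_all add: digit_weight_def fact_numeral)
  have "digit_tree_poly n 1 0 = X * digit_tree_poly n 2 1"
    using digit_tree_poly_step[of 1 n 0] assms weights by (simp add: digits numeral_2_eq_2)
  also have "digit_tree_poly n 2 1 = digit_tree_poly n 3 1 + X * digit_tree_poly n 3 5"
    using digit_tree_poly_step[of 2 n 1] assms weights by (simp add: digits numeral_3_eq_3)
  also have "digit_tree_poly n 3 1 = ascent_poly n 2 0"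
    using assms by (subst digit_tree_poly_eq_ascent_poly) (auto simp: fact_numeral)
  also have "digit_tree_poly n 3 5 = ascent_poly n 2 2"
    using assms by (subst digit_tree_poly_eq_ascent_poly) (auto simp: fact_numeral)
  finally show ?thesis .
qed

lemma gamma_nonneg_sum_prod_digit_weight:
  assumes "1 \<le> n"
  shows "gamma_nonneg (Suc n) (\<Sum>t<fact (Suc n). \<Prod>s\<in>{1..n}. digit_weight s t)"
proof (cases "n = 1")
  case True
  have "(\<Sum>t<fact (Suc 1). \<Prod>s\<in>{1..1}. digit_weight s t) = X * [:1:]"
    by (simp add: lessThan_nat_numeral fact_numeral digit_weight_def one_pCons)
  moreover have "gamma_nonneg 2 (X * [:1:])"
    using gamma_nonneg_mult_X[OF gamma_nonneg_const[of 1]] by (simp add: numeral_2_eq_2)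
  ultimately show ?thesis using True by (simp add: numeral_2_eq_2)
next
  case False
  then have n: "2 \<le> n" using assms by simp
  have "(\<Sum>t<fact (Suc n). \<Prod>s\<in>{1..n}. digit_weight s t) = digit_tree_poly n 1 0"
    using sum_prod_digit_weight_eq_digit_tree[of 1 n] by simp
  also have "\<dots> = X * (ascent_poly n 2 0 + X * ascent_poly n 2 (2 - 0))"
    using digit_tree_poly_root[OF n] by simp
  finally have eq: "(\<Sum>t<fact (Suc n). \<Prod>s\<in>{1..n}. digit_weight s t) = \<dots>" .
  have "gamma_nonneg (n - 2 + 1) (ascent_poly n 2 0 + X * ascent_poly n 2 (2 - 0))"
    using gamma_nonneg_ascent_poly[of 2 n] n by auto
  then have "gamma_nonneg (n - 2 + 1 + 2) (X * (ascent_poly n 2 0 + X * ascent_poly n 2 (2 - 0)))"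
    by (rule gamma_nonneg_mult_X)
  moreover have "n - 2 + 1 + 2 = Suc n" using n by simp
  ultimately show ?thesis unfolding eq by simp
qed

theorem corollary3p5:
  fixes n :: nat
  assumes "n \<ge> 1"
  shows "\<exists>\<gamma> :: nat \<Rightarrow> real. (\<forall>i. \<gamma> i \<ge> 0) \<and>
           ell_star n n (factoradic_vertices n) =
             (\<Sum>i\<le>(n + 1) div 2. smult (\<gamma> i) (monom 1 i * [:1, 1:] ^ (n + 1 - 2 * i)))"
proof -
  have "gamma_nonneg (Suc n) (ell_star n n (factoradic_vertices n))"
    using gamma_nonneg_sum_prod_digit_weight[OF assms]
    by (simp only: sum_prod_digit_weight_eq_ell_star[OF assms])
  then show ?thesis unfolding gamma_nonneg_def by simp
qed

end
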